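(* Regard the sequence $(c_n)_{n\ge0}$ (with values in $\{0,1\}$) as integers and let $C(X)=\sum_{n\ge0}c_nX^n\in\mathbb{C}[[X]]$. Then $C$ satisfies the functional equation $$C(X)=X(X+1)+\frac{X^3(X^4-1)}{(X-1)(X^4+1)}\,C(X^4).$$ Moreover, $C(X)$ is transcendental over $\mathbb{C}(X)$.
   Context: For $n\in\mathbb{N}$ let $s_2(n)$ be the sum of the binary digits of $n$ and $t_n=s_2(n)\bmod 2$ (the Prouhet–Thue–Morse sequence). Let $F(X)=\sum_{n\ge1}t_nX^n\in\mathbb{F}_2[[X]]$ and let $G(X)=\sum_{n\ge1}c_nX^n\in\mathbb{F}_2[[X]]$ be its compositional inverse, i.e. $F(G(X))=G(F(X))=X$; set $c_0=0$. Each $c_n$ is identified with the integer $0$ or $1$. *)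

theory Defs
  imports "HOL-Computational_Algebra.Computational_Algebra" "HOL-Library.Z2"
begin

fun s2 :: "nat \<Rightarrow> nat" where
  "s2 n = (if n = 0 then 0 else n mod 2 + s2 (n div 2))"

definition ptm :: "nat \<Rightarrow> bit" where
  "ptm n = of_nat (s2 n mod 2)"

definition F_ptm :: "bit fps" where
  "F_ptm = Abs_fps (\<lambda>n. if n = 0 then 0 else ptm n)"

text \<open>G = compositional inverse of F (F has F$0 = 0, F$1 = 1).\<close>
definition G_ptm :: "bit fps" where
  "G_ptm = fps_inv F_ptm"

definition c_ptm :: "nat \<Rightarrow> complex" where
  "c_ptm n = (if n = 0 then 0 else if G_ptm $ n = 1 then 1 else 0)"

definition C_ptm :: "complex fps" where
  "C_ptm = Abs_fps c_ptm"

text \<open>A formal power series f is algebraic over C(X) iff there is a nonzero polynomial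
  P(Y) with coefficients in C[X] (equivalently, after clearing denominators, in C(X))
  such that P(f) = 0.\<close>
definition fps_algebraic_over_rat_funs :: "complex fps \<Rightarrow> bool" where
  "fps_algebraic_over_rat_funs f \<longleftrightarrow>
     (\<exists>p :: complex poly poly. p \<noteq> 0 \<and> poly (map_poly fps_of_poly p) f = 0)"

end

theory Submission
  imports Defs
begin

(*
  Over GF(2), the recursion t(2k) = t(k), t(2k+1) = 1 + t(k) and the Frobenius identity
  f^2 = f(X^2) give (1+X)^2 F = (1+X)^3 F^2 + X. Substituting G for X, the series w = X(1+G)
  satisfies X = w + w^2 + w^3, i.e. 1 + X = (1+w)^3, and Frobenius turns this into the Mahler
  equation (1+X^4) H = (1+X+X^2+X^3) H(X^4) for H = 1 + X + XG. Together with H(0) = 1 this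
  equation determines H over any ring, and it has a 0/1 solution: its n-th coefficient says that
  all base-4 digits of n div 4 are even. Hence the 0/1 lift C of G satisfies 1 + X + XC = H
  over the complex numbers, which yields the functional equation.

  If H were algebraic, applying X |-> X^4 to a minimal annihilating polynomial and comparing with
  the original would give v(X^4) A^d u = v u(X^4) B^d for nonzero polynomials u, v and d > 0,
  where A = 1 + X^4 and B = 1 + X + X^2 + X^3. Then f z = ord_z u - ord_z v satisfies
  f z = f (z^4) + d (ord_z B - ord_z A). So f is constant along the fourth-root orbits
  cis (t/4^k), 0 < t < pi, which avoid the roots of A and B; having finite support, f vanishes
  there, and the values forced at i, -1 and cis (pi/4) give d = 0.
*)

section \<open>Power series in characteristic two\<close>

lemma fps_compose_X_power_nth:
  fixes f :: "'a::comm_ring_1 fps"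
  assumes "k > 0"
  shows "(f oo fps_X ^ k) $ n = (if k dvd n then f $ (n div k) else 0)"
proof -
  have "(f oo fps_X ^ k) $ n = (\<Sum>i=0..n. f $ i * (if n = k * i then 1 else 0))"
    by (simp add: fps_compose_nth power_mult[symmetric] mult.commute)
  also have "\<dots> = (\<Sum>i\<in>(if k dvd n then {n div k} else {}). f $ i)"
    using assms by (intro sum.mono_neutral_cong_right) (auto split: if_splits)
  finally show ?thesis by auto
qed

lemma sum_atMost_symmetric:
  fixes g :: "nat \<Rightarrow> 'a::comm_semiring_1"
  assumes sym: "\<And>k. k \<le> n \<Longrightarrow> g (n - k) = g k"
  shows "(\<Sum>k\<le>n. g k) = 2 * (\<Sum>k | 2 * k < n. g k) + (if even n then g (n div 2) else 0)"
proof -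
  define L where "L = {k. 2 * k < n}"
  define U where "U = {k. n < 2 * k \<and> k \<le> n}"
  define M where "M = {k. 2 * k = n}"
  have fin: "finite L" "finite U" "finite M"
    unfolding L_def U_def M_def by (auto intro: finite_subset[of _ "{..n}"])
  have "{..n} = L \<union> U \<union> M" by (auto simp: L_def U_def M_def)
  moreover have "L \<inter> U = {}" "(L \<union> U) \<inter> M = {}" by (auto simp: L_def U_def M_def)
  ultimately have "(\<Sum>k\<le>n. g k) = sum g L + sum g U + sum g M"
    using fin by (simp add: sum.union_disjoint)
  also have "sum g U = sum g L"
    by (rule sum.reindex_bij_witness[of _ "\<lambda>k. n - k" "\<lambda>k. n - k"]) (auto simp: L_def U_def sym)
  also have "M = (if even n then {n div 2} else {})" by (auto simp: M_def)
  finally show ?thesis by (simp add: L_def mult_2)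
qed

lemma fps_square_nth_CHAR_2:
  fixes f :: "'a::comm_ring_1 fps"
  assumes "CHAR('a) = 2"
  shows "(f ^ 2) $ n = (if even n then (f $ (n div 2)) ^ 2 else 0)"
proof -
  have two: "(2 :: 'a) = 0" using of_nat_CHAR[where 'a='a] assms by simp
  have "(f ^ 2) $ n = (\<Sum>k\<le>n. f $ k * f $ (n - k))" by (rule fps_square_nth)
  also have "\<dots> = (if even n then f $ (n div 2) * f $ (n - n div 2) else 0)"
    by (subst sum_atMost_symmetric) (auto simp: two mult.commute)
  finally show ?thesis by (auto simp: power2_eq_square)
qed

lemma CHAR_2_power_one_plus:
  fixes x :: "'a::comm_ring_1"
  assumes "CHAR('a) = 2"
  shows "(1 + x) ^ 2 = 1 + x ^ 2" "(1 + x) ^ 3 = 1 + x + x ^ 2 + x ^ 3" "(1 + x) ^ 4 = 1 + x ^ 4"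
proof -
  show sq: "(1 + x) ^ 2 = 1 + x ^ 2"
    using assms by (subst freshmans_dream) auto
  have "(1 + x) ^ 3 = (1 + x) ^ 2 * (1 + x)"
    by (simp add: power2_eq_square power3_eq_cube)
  then show "(1 + x) ^ 3 = 1 + x + x ^ 2 + x ^ 3"
    unfolding sq by (simp add: algebra_simps power2_eq_square power3_eq_cube)
  show "(1 + x) ^ 4 = 1 + x ^ 4"
    using assms by (subst freshmans_dream'[where n = 2]) auto
qed

lemma CHAR_bit: "CHAR(bit) = 2"
  by (rule CHAR_eq_posI) (auto simp: less_2_cases_iff)

lemma CHAR_bit_fps: "CHAR(bit fps) = 2"
  by (simp add: CHAR_bit)

lemma bit_fps_square: "(f :: bit fps) ^ 2 = f oo fps_X ^ 2"
proof (rule fps_ext)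
  fix n
  have sq: "(x :: bit) ^ 2 = x" for x by (cases x) simp_all
  show "(f ^ 2) $ n = (f oo fps_X ^ 2) $ n"
    unfolding fps_square_nth_CHAR_2[OF CHAR_bit] fps_compose_X_power_nth[OF pos2] sq ..
qed

lemma bit_fps_power_4: "(f :: bit fps) ^ 4 = f oo fps_X ^ 4"
proof -
  have X2: "(fps_X ^ 2 :: bit fps) $ 0 = 0" by simp
  have "f ^ 4 = (f ^ 2) ^ 2" by (simp flip: power_mult)
  also have "\<dots> = f oo fps_X ^ 2 oo fps_X ^ 2"
    by (simp only: bit_fps_square[of "f oo fps_X ^ 2"] bit_fps_square[of f])
  also have "\<dots> = f oo (fps_X ^ 2 oo fps_X ^ 2)" by (rule fps_compose_assoc[OF X2 X2, symmetric])
  also have "fps_X ^ 2 oo fps_X ^ 2 = (fps_X ^ 4 :: bit fps)"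
    by (simp only: fps_compose_power[OF X2, symmetric] fps_X_fps_compose_startby0[OF X2] power_mult[symmetric]) simp
  finally show ?thesis .
qed

section \<open>The Thue--Morse series and its inverse over GF(2)\<close>

lemma ptm_eq_odd_s2: "ptm n = of_bool (odd (s2 n))"
  by (simp add: ptm_def flip: of_bool_odd_eq_mod_2)

lemma ptm_double: "ptm (2 * k) = ptm k"
  unfolding ptm_eq_odd_s2 by (subst s2.simps) simp

lemma ptm_double_plus_1: "ptm (2 * k + 1) = 1 + ptm k"
  unfolding ptm_eq_odd_s2 by (subst s2.simps) simp

lemma F_ptm_nth: "F_ptm $ n = ptm n"
  by (simp add: F_ptm_def ptm_eq_odd_s2)

lemma F_ptm_even_odd_split:
  "F_ptm = (1 + fps_X) * (F_ptm oo fps_X ^ 2) + Abs_fps (\<lambda>n. of_bool (odd n))"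
proof (rule fps_ext)
  fix n
  have "(F_ptm oo fps_X ^ 2) $ m = (if even m then ptm (m div 2) else 0)" for m
    by (simp add: fps_compose_X_power_nth F_ptm_nth)
  moreover obtain k :: nat where "n = 2 * k \<or> n = 2 * k + 1" by (metis oddE evenE)
  ultimately show "F_ptm $ n = ((1 + fps_X) * (F_ptm oo fps_X ^ 2) + Abs_fps (\<lambda>n. of_bool (odd n))) $ n"
    using ptm_double[of k] ptm_double_plus_1[of k] by (auto simp: distrib_right F_ptm_nth)
qed

lemma one_plus_X_squared_mult_odd_indicator:
  "(1 + fps_X ^ 2) * Abs_fps (\<lambda>n. of_bool (odd n)) = (fps_X :: bit fps)"
  by (rule fps_ext) (auto simp: distrib_right fps_X_power_mult_nth less_2_cases_iff)

lemma F_ptm_quadratic: "(1 + fps_X) ^ 2 * F_ptm = (1 + fps_X) ^ 3 * F_ptm ^ 2 + fps_X"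
proof -
  define odds :: "bit fps" where "odds = Abs_fps (\<lambda>n. of_bool (odd n))"
  have "(1 + fps_X) ^ 2 * F_ptm = (1 + fps_X) ^ 2 * ((1 + fps_X) * F_ptm ^ 2 + odds)"
    by (subst (1) F_ptm_even_odd_split) (simp add: odds_def bit_fps_square[of F_ptm])
  also have "\<dots> = (1 + fps_X) ^ 3 * F_ptm ^ 2 + (1 + fps_X) ^ 2 * odds"
    by (simp add: algebra_simps power3_eq_cube power2_eq_square)
  also have "(1 + fps_X) ^ 2 * odds = fps_X"
    unfolding CHAR_2_power_one_plus(1)[OF CHAR_bit_fps] odds_def by (rule one_plus_X_squared_mult_odd_indicator)
  finally show ?thesis .
qed

lemma G_ptm_nth_0: "G_ptm $ 0 = 0"
  by (simp add: G_ptm_def fps_inv_def)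

lemma F_ptm_compose_G_ptm: "F_ptm oo G_ptm = fps_X"
  unfolding G_ptm_def
  by (rule fps_inv_right) (simp_all add: F_ptm_nth ptm_eq_odd_s2 s2.simps)

lemma G_ptm_cubic: "(1 + G_ptm) ^ 2 * fps_X = (1 + G_ptm) ^ 3 * fps_X ^ 2 + G_ptm"
  using arg_cong[OF F_ptm_quadratic, of "\<lambda>f. f oo G_ptm"]
  by (simp only: fps_compose_add_distrib fps_compose_mult_distrib[OF G_ptm_nth_0] fps_compose_1
      fps_compose_power[OF G_ptm_nth_0, symmetric] fps_X_fps_compose_startby0[OF G_ptm_nth_0]
      F_ptm_compose_G_ptm)

lemma cubic_substitution:
  fixes x g :: "'a::comm_ring_1"
  assumes "(1 + g) ^ 2 * x = (1 + g) ^ 3 * x ^ 2 + g"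
  shows "x = x * (1 + g) - (x * (1 + g)) ^ 2 + (x * (1 + g)) ^ 3"
proof -
  have "(x * (1 + g)) ^ 2 = x * ((1 + g) ^ 2 * x)" by (simp add: algebra_simps power2_eq_square)
  also have "\<dots> = (x * (1 + g)) ^ 3 + x * g"
    unfolding assms by (simp add: algebra_simps power2_eq_square power3_eq_cube)
  finally show ?thesis by (simp add: algebra_simps)
qed

lemma G_ptm_mahler:
  "(1 + fps_X ^ 4) * (1 + fps_X + fps_X * G_ptm)
     = (1 + fps_X + fps_X ^ 2 + fps_X ^ 3) * ((1 + fps_X + fps_X * G_ptm) oo fps_X ^ 4)"
proof -
  note char2 = CHAR_2_power_one_plus[OF CHAR_bit_fps]
  define w where "w = fps_X * (1 + G_ptm)"
  have H: "1 + fps_X + fps_X * G_ptm = 1 + w" by (simp add: w_def algebra_simps)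
  have "fps_X = w - w ^ 2 + w ^ 3"
    unfolding w_def by (rule cubic_substitution[OF G_ptm_cubic])
  then have X: "1 + fps_X = (1 + w) ^ 3"
    by (simp add: char2(2) minus_CHAR_2[OF CHAR_bit_fps] add.assoc)
  have X4: "(fps_X ^ 4 :: bit fps) $ 0 = 0" by simp
  have "(1 + fps_X ^ 4) * (1 + w) = (1 + fps_X) ^ 3 * ((1 + fps_X) * (1 + w))"
    by (simp add: char2(3)[symmetric] mult.assoc[symmetric] flip: power_Suc2)
  also have "(1 + fps_X) * (1 + w) = 1 + w ^ 4"
    by (simp only: X char2(3)[symmetric]) (simp flip: power_Suc2)
  also have "1 + w ^ 4 = (1 + w) oo fps_X ^ 4"
    by (simp only: fps_compose_add_distrib fps_compose_1 bit_fps_power_4[of w])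
  finally show ?thesis by (simp only: H char2(2))
qed

section \<open>The Mahler equation and its 0/1 solution\<close>

fun even_base4_digits :: "nat \<Rightarrow> bool" where
  "even_base4_digits q = (if q = 0 then True else even (q mod 4) \<and> even_base4_digits (q div 4))"

declare even_base4_digits.simps [simp del]

lemma even_base4_digits_0 [simp]: "even_base4_digits 0"
  by (simp add: even_base4_digits.simps)

lemma even_base4_digits_4_mult_plus:
  assumes "r < 4"
  shows "even_base4_digits (4 * s + r) \<longleftrightarrow> even r \<and> even_base4_digits s"
  using assms by (subst even_base4_digits.simps) auto

lemma even_base4_digits_imp_even: "even_base4_digits q \<Longrightarrow> even q"
  by (subst (asm) even_base4_digits.simps) (auto split: if_splits intro: dvd_mod_imp_dvd[of 2 q 4])

lemma even_base4_digits_div_4: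
  "even_base4_digits (q div 4) \<longleftrightarrow> even_base4_digits q \<or> (q > 0 \<and> even_base4_digits (q - 1))"
proof -
  obtain s r where q: "q = 4 * s + r" and r: "r < 4"
    by (metis div_mult_mod_eq mod_less_divisor mult.commute zero_less_numeral)
  have s: "q div 4 = s" using q r by simp
  consider "r = 0" | "r = 1" | "r = 2" | "r = 3" using r by linarith
  then show ?thesis
  proof cases
    case 1
    have "s > 0 \<Longrightarrow> q - 1 = 4 * (s - 1) + 3" using q 1 by simp
    then have "s > 0 \<Longrightarrow> \<not> even_base4_digits (q - 1)"
      using even_base4_digits_4_mult_plus[of 3 "s - 1"] by simp
    then show ?thesis using q s 1 even_base4_digits_4_mult_plus[of 0 s] by auto
  next
    case 2
    then show ?thesis using q s even_base4_digits_4_mult_plus[of 0 s] even_base4_digits_4_mult_plus[of 1 s] by simp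
  next
    case 3
    then show ?thesis using q s even_base4_digits_4_mult_plus[of 2 s] even_base4_digits_4_mult_plus[of 1 s] by simp
  next
    case 4
    then show ?thesis using q s even_base4_digits_4_mult_plus[of 2 s] even_base4_digits_4_mult_plus[of 3 s] by simp
  qed
qed

lemma geometric_4_mult_compose_X_4_nth:
  fixes g :: "'a::comm_ring_1 fps"
  shows "((1 + fps_X + fps_X ^ 2 + fps_X ^ 3) * (g oo fps_X ^ 4)) $ n = g $ (n div 4)"
proof -
  obtain q r where n: "n = 4 * q + r" and r: "r < 4"
    by (metis div_mult_mod_eq mod_less_divisor mult.commute zero_less_numeral)
  have hit: "j \<le> n \<and> 4 dvd (n - j) \<longleftrightarrow> j = r" if "j < 4" for j
    using n r that by presburger
  have "1 + fps_X + fps_X ^ 2 + fps_X ^ 3 = (\<Sum>j<4. fps_X ^ j :: 'a fps)"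
    by (simp add: numeral_eq_Suc)
  then have "((1 + fps_X + fps_X ^ 2 + fps_X ^ 3) * (g oo fps_X ^ 4)) $ n
      = (\<Sum>j<4. (fps_X ^ j * (g oo fps_X ^ 4)) $ n)"
    by (simp add: sum_distrib_right fps_sum_nth)
  also have "\<dots> = (\<Sum>j<4. if j = r then g $ q else 0)"
  proof (intro sum.cong refl)
    fix j assume "j \<in> {..<4::nat}"
    then show "(fps_X ^ j * (g oo fps_X ^ 4)) $ n = (if j = r then g $ q else 0)"
      using hit[of j] n by (auto simp: fps_X_power_mult_nth fps_compose_X_power_nth)
  qed
  finally show ?thesis using n r by simp
qed

text \<open>Over GF(2) this is \<open>1 + X + X G\<close>, over \<open>\<complex>\<close> it is \<open>1 + X + X C\<close>.\<close>

definition H_ptm :: "'a::comm_ring_1 fps" where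
  "H_ptm = Abs_fps (\<lambda>n. of_bool (even_base4_digits (n div 4)))"

lemma H_ptm_mahler:
  "(1 + fps_X ^ 4) * H_ptm = (1 + fps_X + fps_X ^ 2 + fps_X ^ 3) * (H_ptm oo fps_X ^ 4)"
proof (rule fps_ext)
  fix n :: nat
  define q where "q = n div 4"
  have shift: "4 \<le> n \<Longrightarrow> (n - 4) div 4 = q - 1" unfolding q_def by (simp add: div_if)
  have "((1 + fps_X ^ 4) * H_ptm) $ n
      = of_bool (even_base4_digits q) + of_bool (q > 0 \<and> even_base4_digits (q - 1))"
    using shift by (auto simp: distrib_right fps_X_power_mult_nth H_ptm_def q_def not_less)
  also have "\<dots> = of_bool (even_base4_digits (q div 4))"
  proof -
    have "\<not> (even_base4_digits q \<and> q > 0 \<and> even_base4_digits (q - 1))"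
      by (auto dest!: even_base4_digits_imp_even)
    then show ?thesis by (auto simp: even_base4_digits_div_4)
  qed
  also have "\<dots> = ((1 + fps_X + fps_X ^ 2 + fps_X ^ 3) * (H_ptm oo fps_X ^ 4)) $ n"
    by (simp add: geometric_4_mult_compose_X_4_nth H_ptm_def q_def)
  finally show "((1 + fps_X ^ 4) * H_ptm) $ n = \<dots>" .
qed

lemma mahler_4_solution_unique:
  fixes a b f g :: "'a::comm_ring_1 fps"
  assumes a0: "a $ 0 = 1"
    and f: "a * f = b * (f oo fps_X ^ 4)" and g: "a * g = b * (g oo fps_X ^ 4)"
    and fg0: "f $ 0 = g $ 0"
  shows "f = g"
proof -
  define h where "h = f - g"
  have h: "a * h = b * (h oo fps_X ^ 4)"
    unfolding h_def fps_compose_sub_distrib by (simp add: algebra_simps f g)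
  have "h $ n = 0" for n
  proof (induction n rule: less_induct)
    case (less n)
    have h0: "h $ 0 = 0" by (simp add: h_def fg0)
    have "(a * h) $ n = (\<Sum>i\<in>{0}. a $ i * h $ (n - i))"
      unfolding fps_mult_nth using less.IH by (intro sum.mono_neutral_right) auto
    then have "(a * h) $ n = h $ n" by (simp add: a0)
    moreover have "(h oo fps_X ^ 4) $ m = 0" if "m \<le> n" for m
      using that less.IH[of "m div 4"] h0 by (cases "m = 0") (auto simp: fps_compose_X_power_nth)
    then have "(b * (h oo fps_X ^ 4)) $ n = 0" by (simp add: fps_mult_nth)
    ultimately show ?case by (simp add: h)
  qed
  then show ?thesis by (simp add: h_def fps_eq_iff)
qed

lemma H_ptm_bit_eq: "(H_ptm :: bit fps) = 1 + fps_X + fps_X * G_ptm"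
  by (rule mahler_4_solution_unique[OF _ H_ptm_mahler G_ptm_mahler]) (simp_all add: H_ptm_def G_ptm_nth_0)

lemma G_ptm_nth: "n > 0 \<Longrightarrow> G_ptm $ n = of_bool (even_base4_digits (Suc n div 4))"
  using arg_cong[OF H_ptm_bit_eq, of "\<lambda>f. f $ Suc n"] by (simp add: H_ptm_def)

lemma C_ptm_eq_H_ptm: "1 + fps_X + fps_X * C_ptm = (H_ptm :: complex fps)"
proof (rule fps_ext)
  fix n
  show "(1 + fps_X + fps_X * C_ptm) $ n = (H_ptm :: complex fps) $ n"
    by (cases n) (auto simp: H_ptm_def C_ptm_def c_ptm_def G_ptm_nth)
qed

text \<open>The factor \<open>x\<close> on both sides can only be cancelled in an integral domain.\<close>

lemma mahler_affine_shift:
  fixes x c s :: "'a::comm_ring_1"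
  assumes "(1 + x ^ 4) * (1 + x + x * c) = (1 + x + x ^ 2 + x ^ 3) * (1 + x ^ 4 + x ^ 4 * s)"
  shows "x * ((x - 1) * (x ^ 4 + 1) * c) = x * (x * (x + 1) * ((x - 1) * (x ^ 4 + 1)) + x ^ 3 * (x ^ 4 - 1) * s)"
proof -
  have "x * ((x - 1) * (x ^ 4 + 1) * c) - x * (x * (x + 1) * ((x - 1) * (x ^ 4 + 1)) + x ^ 3 * (x ^ 4 - 1) * s)
      = (x - 1) * ((1 + x ^ 4) * (1 + x + x * c) - (1 + x + x ^ 2 + x ^ 3) * (1 + x ^ 4 + x ^ 4 * s))"
    by (simp add: algebra_simps eval_nat_numeral)
  then show ?thesis by (simp add: assms)
qed

lemma C_ptm_functional_equation:
  "C_ptm = fps_X * (fps_X + 1)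
     + (fps_X ^ 3 * (fps_X ^ 4 - 1) / ((fps_X - 1) * (fps_X ^ 4 + 1))) * (C_ptm oo fps_X ^ 4)"
proof -
  define U :: "complex fps" where "U = (fps_X - 1) * (fps_X ^ 4 + 1)"
  have U0: "U $ 0 \<noteq> 0" by (simp add: U_def)
  then have "U \<noteq> 0" by auto
  have div_U: "t / U * U = t" for t
    using U0 by (simp add: fps_divide_unit mult.assoc inverse_mult_eq_1)
  have X4: "(fps_X ^ 4 :: complex fps) $ 0 = 0" by simp
  have "(1 + fps_X ^ 4) * (1 + fps_X + fps_X * C_ptm)
      = (1 + fps_X + fps_X ^ 2 + fps_X ^ 3) * ((1 + fps_X + fps_X * C_ptm) oo fps_X ^ 4)"
    unfolding C_ptm_eq_H_ptm by (rule H_ptm_mahler)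
  also have "(1 + fps_X + fps_X * C_ptm) oo fps_X ^ 4 = 1 + fps_X ^ 4 + fps_X ^ 4 * (C_ptm oo fps_X ^ 4)"
    by (simp only: fps_compose_add_distrib fps_compose_mult_distrib[OF X4] fps_compose_1
        fps_X_fps_compose_startby0[OF X4])
  finally have "fps_X * (U * C_ptm)
      = fps_X * (fps_X * (fps_X + 1) * U + fps_X ^ 3 * (fps_X ^ 4 - 1) * (C_ptm oo fps_X ^ 4))"
    unfolding U_def by (rule mahler_affine_shift)
  then have "U * C_ptm = fps_X * (fps_X + 1) * U + fps_X ^ 3 * (fps_X ^ 4 - 1) * (C_ptm oo fps_X ^ 4)"
    by simp
  also have "\<dots> = (fps_X * (fps_X + 1) + (fps_X ^ 3 * (fps_X ^ 4 - 1) / U) * (C_ptm oo fps_X ^ 4)) * U"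
    by (simp add: distrib_right mult.assoc mult.commute[of "C_ptm oo fps_X ^ 4"] div_U)
  finally show ?thesis using \<open>U \<noteq> 0\<close> by (simp add: U_def mult.commute[of _ C_ptm])
qed

lemma H_ptm_mahler_poly:
  "fps_of_poly (monom 1 4 + 1) * H_ptm = fps_of_poly [:1, 1, 1, 1:] * (H_ptm oo fps_X ^ 4 :: complex fps)"
proof -
  have A: "fps_of_poly (monom 1 4 + 1 :: complex poly) = 1 + fps_X ^ 4"
    by (simp add: fps_of_poly_add fps_of_poly_monom')
  have B: "fps_of_poly [:1, 1, 1, 1 :: complex:] = 1 + fps_X + fps_X ^ 2 + fps_X ^ 3"
    by (simp add: fps_of_poly_pCons algebra_simps power2_eq_square power3_eq_cube)
  show ?thesis unfolding A B by (rule H_ptm_mahler)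
qed

section \<open>Power series algebraic over \<open>\<complex>(X)\<close>\<close>

definition poly_coeffs :: "'a::comm_ring_1 fps poly \<Rightarrow> bool" where
  "poly_coeffs P \<longleftrightarrow> (\<forall>i. coeff P i \<in> range fps_of_poly)"

definition algebraic_fps :: "'a::comm_ring_1 fps \<Rightarrow> bool" where
  "algebraic_fps f \<longleftrightarrow> (\<exists>P. P \<noteq> 0 \<and> poly_coeffs P \<and> poly P f = 0)"

lemma range_fps_of_poly_add [intro]:
  fixes f g :: "'a::comm_ring_1 fps"
  shows "f \<in> range fps_of_poly \<Longrightarrow> g \<in> range fps_of_poly \<Longrightarrow> f + g \<in> range fps_of_poly"
  by (auto simp flip: fps_of_poly_add)

lemma range_fps_of_poly_diff [intro]:
  fixes f g :: "'a::comm_ring_1 fps"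
  shows "f \<in> range fps_of_poly \<Longrightarrow> g \<in> range fps_of_poly \<Longrightarrow> f - g \<in> range fps_of_poly"
  by (auto simp flip: fps_of_poly_diff)

lemma range_fps_of_poly_mult [intro]:
  fixes f g :: "'a::comm_ring_1 fps"
  shows "f \<in> range fps_of_poly \<Longrightarrow> g \<in> range fps_of_poly \<Longrightarrow> f * g \<in> range fps_of_poly"
  by (auto simp flip: fps_of_poly_mult)

lemma range_fps_of_poly_power [intro]:
  fixes f :: "'a::comm_ring_1 fps"
  shows "f \<in> range fps_of_poly \<Longrightarrow> f ^ n \<in> range fps_of_poly"
  by (auto simp flip: fps_of_poly_power)

lemma range_fps_of_poly_sum [intro]:
  fixes f :: "'b \<Rightarrow> 'a::comm_ring_1 fps"
  shows "(\<And>i. i \<in> A \<Longrightarrow> f i \<in> range fps_of_poly) \<Longrightarrow> sum f A \<in> range fps_of_poly"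
  by (induction A rule: infinite_finite_induct) (auto intro: rangeI[of _ 0, simplified])

lemma range_fps_of_poly_compose_X_4 [intro]:
  fixes f :: "'a::idom fps"
  shows "f \<in> range fps_of_poly \<Longrightarrow> f oo fps_X ^ 4 \<in> range fps_of_poly"
  by (auto simp: fps_of_poly_monom'[symmetric] fps_of_poly_pcompose[symmetric] coeff_monom)

lemma poly_coeffs_map_fps_of_poly: "poly_coeffs (map_poly fps_of_poly p)"
  by (simp add: poly_coeffs_def coeff_map_poly)

lemma poly_coeffs_0 [simp]: "poly_coeffs 0"
  by (auto simp: poly_coeffs_def intro: rangeI[of _ 0, simplified])

lemma poly_coeffs_pCons [simp]: "poly_coeffs (pCons a P) \<longleftrightarrow> a \<in> range fps_of_poly \<and> poly_coeffs P"
  by (auto simp: poly_coeffs_def coeff_pCons split: nat.splits)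

lemma poly_coeffs_add: "poly_coeffs P \<Longrightarrow> poly_coeffs Q \<Longrightarrow> poly_coeffs (P + Q)"
  by (auto simp: poly_coeffs_def)

lemma poly_coeffs_mult: "poly_coeffs P \<Longrightarrow> poly_coeffs Q \<Longrightarrow> poly_coeffs (P * Q)"
  by (auto simp: poly_coeffs_def coeff_mult intro!: range_fps_of_poly_sum range_fps_of_poly_mult)

lemma poly_coeffs_pcompose: "poly_coeffs P \<Longrightarrow> poly_coeffs Q \<Longrightarrow> poly_coeffs (pcompose P Q)"
  by (induction P rule: pCons_induct)
     (auto simp: pcompose_pCons intro: poly_coeffs_add poly_coeffs_mult)

lemma fps_algebraic_over_rat_funs_imp_algebraic_fps:
  "fps_algebraic_over_rat_funs f \<Longrightarrow> algebraic_fps f"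
  unfolding fps_algebraic_over_rat_funs_def algebraic_fps_def
  by (metis poly_coeffs_map_fps_of_poly map_poly_0 map_poly_eq_0_iff fps_of_poly_eq_iff fps_of_poly_0)

lemma algebraic_fps_affine:
  fixes f :: "'a::idom fps" and a b :: "'a poly"
  assumes "algebraic_fps f"
  shows "algebraic_fps (fps_of_poly a + fps_of_poly b * f)"
proof -
  obtain P where P: "P \<noteq> 0" "poly_coeffs P" "poly P f = 0"
    using assms unfolding algebraic_fps_def by blast
  define d where "d = degree P"
  define R where "R = (\<Sum>i\<le>d. monom (coeff P i * fps_of_poly b ^ (d - i)) i)"
  have coeff_R: "coeff R n = (if n \<le> d then coeff P n * fps_of_poly b ^ (d - n) else 0)" for n
    by (simp add: R_def coeff_sum coeff_monom)
  have "R \<noteq> 0"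
    using coeff_R[of d] P(1) by (auto simp: d_def)
  have "poly_coeffs R"
    using P(2) by (auto simp: poly_coeffs_def coeff_R)
  have "poly R (fps_of_poly b * f) = (\<Sum>i\<le>d. fps_of_poly b ^ d * (coeff P i * f ^ i))"
    unfolding R_def poly_sum poly_monom
    by (intro sum.cong refl) (simp add: power_mult_distrib algebra_simps flip: power_add)
  also have "\<dots> = 0"
    using P(3) by (simp add: poly_altdef d_def flip: sum_distrib_left)
  finally have "poly R (fps_of_poly b * f) = 0" .
  define Q where "Q = pcompose R [:- fps_of_poly a, 1:]"
  have "poly Q (fps_of_poly a + fps_of_poly b * f) = 0"
    unfolding Q_def poly_pcompose using \<open>poly R _ = 0\<close> by simp
  moreover have "Q \<noteq> 0"
    unfolding Q_def using \<open>R \<noteq> 0\<close> pcompose_eq_0 by fastforce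
  moreover have "poly_coeffs Q"
    unfolding Q_def using \<open>poly_coeffs R\<close>
    by (intro poly_coeffs_pcompose) (auto simp flip: fps_of_poly_uminus fps_of_poly_1)
  ultimately show ?thesis unfolding algebraic_fps_def by blast
qed

lemma minimal_annihilator:
  fixes H :: "'a::idom fps"
  assumes "algebraic_fps H" "H \<noteq> 0"
  obtains P where "P \<noteq> 0" "poly_coeffs P" "poly P H = 0" "degree P > 0" "coeff P 0 \<noteq> 0"
    "\<And>Q. Q \<noteq> 0 \<Longrightarrow> poly_coeffs Q \<Longrightarrow> poly Q H = 0 \<Longrightarrow> degree P \<le> degree Q"
proof -
  define annihilates where "annihilates Q \<longleftrightarrow> Q \<noteq> 0 \<and> poly_coeffs Q \<and> poly Q H = 0" for Q
  obtain P0 where "annihilates P0"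
    using assms(1) unfolding algebraic_fps_def annihilates_def by blast
  then obtain P where P: "annihilates P" and min: "\<And>Q. annihilates Q \<Longrightarrow> degree P \<le> degree Q"
    using ex_has_least_nat[where m = degree] by blast
  have "degree P > 0"
  proof (rule ccontr)
    assume "\<not> degree P > 0"
    then obtain c where "P = [:c:]" by (auto elim: degree_eq_zeroE)
    then show False using P by (auto simp: annihilates_def)
  qed
  moreover have "coeff P 0 \<noteq> 0"
  proof
    assume "coeff P 0 = 0"
    then obtain Q where Q: "P = pCons 0 Q" by (metis pCons_cases coeff_pCons_0)
    then have "annihilates Q"
      using P assms(2) by (auto simp: annihilates_def)
    then show False
      using min[of Q] P Q by (auto simp: annihilates_def)
  qed
  ultimately show ?thesis
    using that P min unfolding annihilates_def by blast
qed

lemma mahler_4_twisted_annihilator: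
  fixes H A B :: "'a::idom fps"
  assumes mahler: "A * H = B * (H oo fps_X ^ 4)" and root: "poly P H = 0"
  shows "poly (\<Sum>i\<le>degree P. monom ((coeff P i oo fps_X ^ 4) * B ^ (degree P - i) * A ^ i) i) H = 0"
proof -
  define d where "d = degree P"
  have X4: "(fps_X ^ 4 :: 'a fps) $ 0 = 0" by simp
  have "poly (\<Sum>i\<le>d. monom ((coeff P i oo fps_X ^ 4) * B ^ (d - i) * A ^ i) i) H
      = (\<Sum>i\<le>d. B ^ d * ((coeff P i oo fps_X ^ 4) * (H oo fps_X ^ 4) ^ i))"
    unfolding poly_sum
  proof (intro sum.cong refl)
    fix i assume "i \<in> {..d}"
    then have "B ^ d = B ^ (d - i) * B ^ i" by (simp flip: power_add)
    then show "poly (monom ((coeff P i oo fps_X ^ 4) * B ^ (d - i) * A ^ i) i) H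
        = B ^ d * ((coeff P i oo fps_X ^ 4) * (H oo fps_X ^ 4) ^ i)"
      by (simp add: poly_monom mult.assoc flip: power_mult_distrib mahler)
  qed
  also have "\<dots> = B ^ d * (poly P H oo fps_X ^ 4)"
    by (simp add: poly_altdef d_def sum_distrib_left fps_compose_sum_distrib
        fps_compose_mult_distrib[OF X4] fps_compose_power[OF X4])
  finally show ?thesis by (simp add: root d_def)
qed

lemma mahler_4_minimal_annihilator_relation:
  fixes H A B :: "'a::idom fps"
  assumes A: "A \<in> range fps_of_poly" and B: "B \<in> range fps_of_poly"
    and mahler: "A * H = B * (H oo fps_X ^ 4)"
    and P: "P \<noteq> 0" "poly_coeffs P" "poly P H = 0"
    and min: "\<And>Q. Q \<noteq> 0 \<Longrightarrow> poly_coeffs Q \<Longrightarrow> poly Q H = 0 \<Longrightarrow> degree P \<le> degree Q"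
  shows "(lead_coeff P oo fps_X ^ 4) * A ^ degree P * coeff P 0
    = lead_coeff P * (coeff P 0 oo fps_X ^ 4) * B ^ degree P"
proof -
  define d where "d = degree P"
  define p where "p = coeff P"
  define R where "R = (\<Sum>i\<le>d. monom ((p i oo fps_X ^ 4) * B ^ (d - i) * A ^ i) i)"
  have "poly R H = 0"
    using mahler_4_twisted_annihilator[OF mahler P(3)] by (simp add: R_def d_def p_def)
  define S where "S = smult ((p d oo fps_X ^ 4) * A ^ d) P - smult (p d) R"
  have coeff_S: "coeff S n = (p d oo fps_X ^ 4) * A ^ d * p n
      - p d * (if n \<le> d then (p n oo fps_X ^ 4) * B ^ (d - n) * A ^ n else 0)" for n
    by (simp add: S_def R_def p_def coeff_sum coeff_monom)
  have "S = 0"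
  proof (rule ccontr)
    assume "S \<noteq> 0"
    have "coeff S n = 0" if "n \<ge> d" for n
      using that P(1) by (cases "n = d") (simp_all add: coeff_S p_def d_def coeff_eq_0)
    then have "degree S < d"
      using \<open>S \<noteq> 0\<close> leading_coeff_0_iff[of S] by (meson not_le)
    moreover have "poly S H = 0"
      by (simp add: S_def P(3) \<open>poly R H = 0\<close>)
    moreover have "poly_coeffs S"
      using P(2) A B unfolding poly_coeffs_def coeff_S p_def
      by (auto intro!: range_fps_of_poly_diff range_fps_of_poly_mult range_fps_of_poly_power
          range_fps_of_poly_compose_X_4)
    ultimately show False using min[OF \<open>S \<noteq> 0\<close>] by (simp add: d_def)
  qed
  then show ?thesis
    using coeff_S[of 0] by (simp add: p_def d_def mult.assoc)
qed

lemma mahler_4_algebraic_identity: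
  fixes H :: "'a::idom fps" and a b :: "'a poly"
  assumes "algebraic_fps H" "H \<noteq> 0"
    and mahler: "fps_of_poly a * H = fps_of_poly b * (H oo fps_X ^ 4)"
  obtains u v d where "u \<noteq> 0" "v \<noteq> 0" "d > 0"
    "pcompose v (monom 1 4) * a ^ d * u = v * pcompose u (monom 1 4) * b ^ d"
proof -
  obtain P where P: "P \<noteq> 0" "poly_coeffs P" "poly P H = 0" "degree P > 0" "coeff P 0 \<noteq> 0"
    and min: "\<And>Q. Q \<noteq> 0 \<Longrightarrow> poly_coeffs Q \<Longrightarrow> poly Q H = 0 \<Longrightarrow> degree P \<le> degree Q"
    using minimal_annihilator[OF assms(1,2)] by blast
  obtain u v where u: "coeff P 0 = fps_of_poly u" and v: "lead_coeff P = fps_of_poly v"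
    using P(2) unfolding poly_coeffs_def by blast
  have compose: "fps_of_poly w oo fps_X ^ 4 = fps_of_poly (pcompose w (monom 1 4))" for w :: "'a poly"
    by (simp add: fps_of_poly_pcompose coeff_monom fps_of_poly_monom')
  have E: "(fps_of_poly v oo fps_X ^ 4) * fps_of_poly a ^ degree P * fps_of_poly u
      = fps_of_poly v * (fps_of_poly u oo fps_X ^ 4) * fps_of_poly b ^ degree P"
    using mahler_4_minimal_annihilator_relation[OF rangeI rangeI mahler P(1-3) min] unfolding u v .
  have "fps_of_poly (pcompose v (monom 1 4) * a ^ degree P * u)
      = fps_of_poly (v * pcompose u (monom 1 4) * b ^ degree P)"
    using E unfolding compose by (simp only: fps_of_poly_mult fps_of_poly_power)
  then have "pcompose v (monom 1 4) * a ^ degree P * u = v * pcompose u (monom 1 4) * b ^ degree P"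
    by (simp only: fps_of_poly_eq_iff)
  moreover have "u \<noteq> 0" using P(5) u by auto
  moreover have "v \<noteq> 0" using P(1) v by auto
  ultimately show ?thesis using that P(4) by blast
qed

section \<open>Root multiplicities and the transcendence of \<open>C\<close>\<close>

lemma order_power: "p \<noteq> 0 \<Longrightarrow> order z (p ^ n) = n * order z p"
  by (induction n) (auto simp: order_mult)

lemma pcompose_power: "pcompose (p ^ n) q = pcompose p q ^ n"
  by (induction n) (simp_all add: pcompose_mult pcompose_1)

lemma order_pcompose:
  fixes p q :: "'a::idom poly"
  assumes "p \<noteq> 0" "degree q > 0"
  shows "order z (pcompose p q) = order z (q - [:poly q z:]) * order (poly q z) p"
proof -
  define w where "w = poly q z"
  define k where "k = order w p"
  obtain r where p: "p = [:- w, 1:] ^ k * r" and "\<not> [:- w, 1:] dvd r"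
    using order_decomp[OF assms(1)] unfolding k_def by blast
  then have r: "poly (pcompose r q) z \<noteq> 0"
    by (simp add: poly_pcompose poly_eq_0_iff_dvd w_def)
  have "pcompose [:- w, 1:] q = q - [:w:]"
    by (simp add: pcompose_pCons)
  then have "pcompose p q = (q - [:w:]) ^ k * pcompose r q"
    by (subst p) (simp add: pcompose_mult pcompose_power)
  moreover have "q - [:w:] \<noteq> 0"
    using assms(2) by auto
  moreover have "pcompose r q \<noteq> 0"
    using r by auto
  ultimately have "order z (pcompose p q) = order z ((q - [:w:]) ^ k) + order z (pcompose r q)"
    by (simp add: order_mult)
  also have "\<dots> = k * order z (q - [:w:])"
    using \<open>q - [:w:] \<noteq> 0\<close> r by (simp add: order_power order_0I)
  finally show ?thesis by (simp add: w_def k_def)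
qed

lemma rsquarefree_order: "rsquarefree p \<Longrightarrow> order z p = of_bool (poly p z = 0)"
  using rsquarefree_root_order[of p z] order_0I[of p z] by (cases "poly p z = 0") (auto simp: rsquarefree_def)

lemma rsquarefree_X_power_4_minus:
  assumes "c \<noteq> 0"
  shows "rsquarefree (monom 1 4 - [:c:] :: complex poly)"
  unfolding rsquarefree_roots using assms by (auto simp: pderiv_monom poly_monom pderiv_diff)

lemma order_X_power_4_minus:
  "c \<noteq> 0 \<Longrightarrow> order z (monom 1 4 - [:c:]) = of_bool (z ^ 4 = (c :: complex))"
  by (simp add: rsquarefree_order rsquarefree_X_power_4_minus poly_monom)

lemma order_pcompose_X_power_4:
  fixes p :: "complex poly"
  assumes "p \<noteq> 0" "z \<noteq> 0"
  shows "order z (pcompose p (monom 1 4)) = order (z ^ 4) p"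
  using assms by (simp add: order_pcompose degree_monom_eq poly_monom order_X_power_4_minus)

lemma order_X_power_4_plus_1:
  "order z (monom 1 4 + 1 :: complex poly) = of_bool (z ^ 4 = -1)"
proof -
  have "monom 1 4 + 1 = monom 1 4 - [:- 1 :: complex:]" by (simp add: one_pCons)
  moreover have "order z (monom 1 4 - [:- 1:]) = of_bool (z ^ 4 = - 1)"
    by (rule order_X_power_4_minus) simp
  ultimately show ?thesis by (simp only:)
qed

lemma order_geometric_4:
  "order z [:1, 1, 1, 1 :: complex:] = of_bool (z ^ 4 = 1 \<and> z \<noteq> 1)"
proof -
  have factor: "[:1, 1, 1, 1:] * [:-1, 1:] = monom 1 4 - [:1 :: complex:]"
    by (rule poly_eqI) (simp add: coeff_monom coeff_pCons split: nat.split)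
  have "order z [:1, 1, 1, 1:] + order z [:-1, 1:] = order z (monom 1 4 - [:1 :: complex:])"
    by (subst order_mult[symmetric]) (simp_all flip: factor)
  also have "\<dots> = of_bool (z ^ 4 = 1)"
    by (rule order_X_power_4_minus) simp
  moreover have "order z [:-1, 1 :: complex:] = of_bool (z = 1)"
    using order_power_n_n[of 1 1] by (auto intro: order_0I)
  ultimately show ?thesis by auto
qed

lemma cis_orbit_vanishes:
  fixes g :: "complex \<Rightarrow> 'b::zero"
  assumes fin: "finite {z. g z \<noteq> 0}"
    and step: "\<And>t. 0 < t \<Longrightarrow> t < pi \<Longrightarrow> g (cis (t / 4)) = g (cis t)"
    and t: "0 < t" "t < pi"
  shows "g (cis t) = 0"
proof (rule ccontr)
  assume nz: "g (cis t) \<noteq> 0"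
  define u where "u k = cis (t / 4 ^ k)" for k :: nat
  have arg: "0 < t / 4 ^ k \<and> t / 4 ^ k < pi" for k :: nat
  proof -
    have "t / 4 ^ k \<le> t" using t by (simp add: divide_le_eq mult_le_cancel_left1)
    then show ?thesis using t by simp
  qed
  have "g (u k) = g (cis t)" for k
  proof (induction k)
    case (Suc k)
    then show ?case using step[of "t / 4 ^ k"] arg[of k] by (simp add: u_def field_simps)
  qed (simp add: u_def)
  then have "range u \<subseteq> {z. g z \<noteq> 0}" using nz by auto
  moreover have "inj u"
  proof (rule injI)
    fix j k assume "u j = u k"
    then have "cos (t / 4 ^ j) = cos (t / 4 ^ k)" by (metis u_def cis.sel(1))
    then have "t / 4 ^ j = t / 4 ^ k" using arg[of j] arg[of k] by (meson cos_inj_pi less_imp_le)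
    then show "j = k" using t by (simp add: field_simps)
  qed
  ultimately show False
    using fin finite_subset infinite_UNIV_nat finite_imageD by blast
qed

lemma mahler_4_identity_order_relation:
  fixes u v :: "complex poly"
  assumes u: "u \<noteq> 0" and v: "v \<noteq> 0" and "z \<noteq> 0"
    and identity: "pcompose v (monom 1 4) * (monom 1 4 + 1) ^ d * u = v * pcompose u (monom 1 4) * [:1, 1, 1, 1:] ^ d"
  shows "int (order z u) - int (order z v) = int (order (z ^ 4) u) - int (order (z ^ 4) v)
    + int d * (of_bool (z ^ 4 = 1 \<and> z \<noteq> 1) - of_bool (z ^ 4 = -1))"
proof -
  have nz: "pcompose w (monom 1 4) \<noteq> 0" if "w \<noteq> 0" for w :: "complex poly"
    using that pcompose_eq_0[of w "monom 1 4"] by (auto simp: degree_monom_eq)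
  have "monom 1 4 + 1 \<noteq> (0 :: complex poly)"
    using arg_cong[where f = "\<lambda>p. poly p 0", of "monom 1 4 + 1" 0] by (auto simp: poly_monom)
  moreover have "[:1, 1, 1, 1 :: complex:] \<noteq> 0" by simp
  ultimately have "order (z ^ 4) v + d * of_bool (z ^ 4 = -1) + order z u
      = order z v + order (z ^ 4) u + d * of_bool (z ^ 4 = 1 \<and> z \<noteq> 1)"
    using arg_cong[OF identity, of "order z"] u v nz[OF u] nz[OF v] \<open>z \<noteq> 0\<close>
    by (simp add: order_mult order_power order_pcompose_X_power_4 order_X_power_4_plus_1 order_geometric_4)
  then have "int (order (z ^ 4) v) + int d * of_bool (z ^ 4 = -1) + int (order z u)
      = int (order z v) + int (order (z ^ 4) u) + int d * of_bool (z ^ 4 = 1 \<and> z \<noteq> 1)"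
    by (metis of_nat_add of_nat_mult of_nat_of_bool)
  then show ?thesis by (simp add: algebra_simps)
qed

lemma no_mahler_4_identity:
  fixes u v :: "complex poly"
  assumes u: "u \<noteq> 0" and v: "v \<noteq> 0" and d: "d > 0"
  shows "pcompose v (monom 1 4) * (monom 1 4 + 1) ^ d * u \<noteq> v * pcompose u (monom 1 4) * [:1, 1, 1, 1:] ^ d"
proof
  assume identity: "pcompose v (monom 1 4) * (monom 1 4 + 1) ^ d * u = v * pcompose u (monom 1 4) * [:1, 1, 1, 1:] ^ d"
  define f where "f z = int (order z u) - int (order z v)" for z
  have rel: "f z = f (z ^ 4) + int d * (of_bool (z ^ 4 = 1 \<and> z \<noteq> 1) - of_bool (z ^ 4 = -1))"
    if "z \<noteq> 0" for z
    unfolding f_def using mahler_4_identity_order_relation[OF u v that identity] .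
  have "finite {z. poly (u * v) z = 0}"
    using u v by (intro poly_roots_finite) simp
  moreover have "{z. f z \<noteq> 0} \<subseteq> {z. poly (u * v) z = 0}"
    using u v by (auto simp: f_def order_root)
  ultimately have fin: "finite {z. f z \<noteq> 0}" by (rule finite_subset[rotated])
  have orbit: "f (cis t) = 0" if "0 < t" "t < pi" for t
  proof (rule cis_orbit_vanishes[OF fin _ that])
    fix t :: real assume t: "0 < t" "t < pi"
    then have "Im (cis t) \<noteq> 0" using sin_gt_zero[of t] by simp
    then have "cis t \<noteq> 1" "cis t \<noteq> -1" by (auto simp: complex_eq_iff)
    moreover have "cis (t / 4) ^ 4 = cis t" by (simp add: DeMoivre)
    ultimately show "f (cis (t / 4)) = f (cis t)" using rel[of "cis (t / 4)"] by simp
  qed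
  have "cis (pi / 4) ^ 4 = -1" by (simp add: DeMoivre)
  then have "f (cis (pi / 4)) = f (-1) - int d"
    using rel[of "cis (pi / 4)"] by simp
  moreover have "f (-1) = f 1 + int d"
    using rel[of "-1"] by simp
  moreover have "f \<i> = f 1 + int d"
    using rel[of \<i>] by (simp add: power_mult[of _ 2 2, simplified])
  moreover have "f \<i> = 0" "f (cis (pi / 4)) = 0"
    using orbit[of "pi / 2"] orbit[of "pi / 4"] by (simp_all add: pi_gt_zero)
  ultimately show False using d by linarith
qed

theorem mainTheorem3:
  shows "C_ptm = fps_X * (fps_X + 1)
           + (fps_X ^ 3 * (fps_X ^ 4 - 1) / ((fps_X - 1) * (fps_X ^ 4 + 1))) * (C_ptm oo fps_X ^ 4)
         \<and> \<not> fps_algebraic_over_rat_funs C_ptm"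
proof
  show "C_ptm = fps_X * (fps_X + 1)
           + (fps_X ^ 3 * (fps_X ^ 4 - 1) / ((fps_X - 1) * (fps_X ^ 4 + 1))) * (C_ptm oo fps_X ^ 4)"
    by (rule C_ptm_functional_equation)
  show "\<not> fps_algebraic_over_rat_funs C_ptm"
  proof
    assume "fps_algebraic_over_rat_funs C_ptm"
    then have "algebraic_fps (fps_of_poly [:1, 1:] + fps_of_poly [:0, 1:] * C_ptm)"
      by (intro algebraic_fps_affine fps_algebraic_over_rat_funs_imp_algebraic_fps)
    also have "fps_of_poly [:1, 1:] + fps_of_poly [:0, 1:] * C_ptm = H_ptm"
      by (simp add: fps_of_poly_pCons C_ptm_eq_H_ptm[symmetric])
    finally have algebraic: "algebraic_fps (H_ptm :: complex fps)" .
    have "(H_ptm :: complex fps) $ 0 = 1" by (simp add: H_ptm_def)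
    then have nonzero: "(H_ptm :: complex fps) \<noteq> 0" by auto
    obtain u v :: "complex poly" and d where "u \<noteq> 0" "v \<noteq> 0" "d > 0"
      "pcompose v (monom 1 4) * (monom 1 4 + 1) ^ d * u = v * pcompose u (monom 1 4) * [:1, 1, 1, 1:] ^ d"
      by (rule mahler_4_algebraic_identity[OF algebraic nonzero H_ptm_mahler_poly])
    then show False by (metis no_mahler_4_identity)
  qed
qed

end
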